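(* Let $\mathcal G$ be a core network with input nodes $\iota_1,\dots,\iota_n$ and output node $o$, fix $m$, and let $\mathcal D_m$ be the vestigial subnetwork with respect to $\iota_m$ (assumed nonempty). Let $D_{m,j}$ be one of the diagonal blocks of the Frobenius–König normal form of $J_{\mathcal D_m}$ and let $\mathcal D_{m,j}$ be the subnetwork of $\mathcal D_m$ associated to $D_{m,j}$. Then: (a) nodes in $\mathcal D_{m,j}$ are not $\mathcal D_m$-path equivalent to any node in $\mathcal D_m\setminus\mathcal D_{m,j}$; (b) $\mathcal D_{m,j}$ is a path component of $\mathcal D_m$.
   Context: Setting: $\mathcal G$ is a finite directed graph with input nodes $\iota_1,\dots,\iota_n$ and output node $o$; node $b$ is downstream from $a$ (and $a$ upstream from $b$) if there is a directed path from $a$ to $b$ (every node is up/downstream from itself). $\mathcal G$ is a core network if every node is upstream from $o$ and downstream from at least one input node. $\mathcal G_m$ is the subnetwork of nodes downstream from $\iota_m$ and upstream from $o$; the vestigial subnetwork $\mathcal D_m$ consists of the nodes of $\mathcal G$ not in $\mathcal G_m$ (i.e. not downstream from $\iota_m$) with all arrows of $\mathcal G$ between them. Each node $j$ carries a function $f_j$ and the partial derivatives $f_{j,x_\ell}$, one for each arrow $\ell\to j$ and one self-coupling $f_{j,x_j}$ for every node, are regarded as independent indeterminates; for a set of nodes $\mathcal K$, $J_{\mathcal K}=(f_{j,x_\ell})_{j,\ell\in\mathcal K}$ (entries $0$ where there is no arrow). By Frobenius–König theory there are permutation matrices $P_m,Q_m$ with $P_mJ_{\mathcal D_m}Q_m$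 block upper triangular with square fully indecomposable diagonal blocks $D_{m,1},\dots,D_{m,n_m}$, each with irreducible determinant. Each block $D_{m,j}$ of order $k_j$ contains exactly $k_j$ self-couplings, and after permuting rows and columns it equals $J_{\mathcal D_{m,j}}$ for the set $\mathcal D_{m,j}$ of nodes indexing its rows; $\mathcal D_{m,j}$ (with all arrows between its nodes) is the subnetwork associated to $D_{m,j}$. For a subnetwork $\mathcal K$, nodes $a,b$ are $\mathcal K$-path equivalent if there are directed paths within $\mathcal K$ from $a$ to $b$ and from $b$ to $a$; a $\mathcal K$-path component is an equivalence class. *)

theory Defs
  imports Main
begin

text \<open>A network: finite node set V, arrows E as pairs (source, target).
  Node b is downstream from a iff (a,b) is in the reflexive transitive closure of E.\<close>

definition core_network ::
  "'a set \<Rightarrow> ('a \<times> 'a) set \<Rightarrow> (nat \<Rightarrow> 'a) \<Rightarrow> nat \<Rightarrow> 'a \<Rightarrow> bool" where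
  "core_network V E inp n out \<longleftrightarrow>
     finite V \<and> E \<subseteq> V \<times> V \<and> out \<in> V \<and> (\<forall>i\<in>{1..n}. inp i \<in> V) \<and>
     (\<forall>v\<in>V. (v, out) \<in> E\<^sup>* \<and> (\<exists>i\<in>{1..n}. (inp i, v) \<in> E\<^sup>*))"

definition sub_G :: "'a set \<Rightarrow> ('a \<times> 'a) set \<Rightarrow> (nat \<Rightarrow> 'a) \<Rightarrow> 'a \<Rightarrow> nat \<Rightarrow> 'a set" where
  "sub_G V E inp out m = {v \<in> V. (inp m, v) \<in> E\<^sup>* \<and> (v, out) \<in> E\<^sup>*}"

text \<open>Vestigial subnetwork D_m (its arrows are all arrows of E between its nodes).\<close>
definition vestigial :: "'a set \<Rightarrow> ('a \<times> 'a) set \<Rightarrow> (nat \<Rightarrow> 'a) \<Rightarrow> 'a \<Rightarrow> nat \<Rightarrow> 'a set" where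
  "vestigial V E inp out m = V - sub_G V E inp out m"

definition restr :: "('a \<times> 'a) set \<Rightarrow> 'a set \<Rightarrow> ('a \<times> 'a) set" where
  "restr E K = E \<inter> (K \<times> K)"

definition path_equiv :: "('a \<times> 'a) set \<Rightarrow> 'a set \<Rightarrow> 'a \<Rightarrow> 'a \<Rightarrow> bool" where
  "path_equiv E K a b \<longleftrightarrow> a \<in> K \<and> b \<in> K \<and> (a, b) \<in> (restr E K)\<^sup>* \<and> (b, a) \<in> (restr E K)\<^sup>*"

definition path_component :: "('a \<times> 'a) set \<Rightarrow> 'a set \<Rightarrow> 'a set \<Rightarrow> bool" where
  "path_component E K C \<longleftrightarrow> (\<exists>a\<in>K. C = {b. path_equiv E K a b})"

text \<open>Nonzero pattern of the Jacobian J_K: the entry in row a, column b is the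
  indeterminate f_{a,x_b}, present iff a = b (self-coupling) or there is an arrow b -> a.
  Since the entries are independent indeterminates, zero/nonzero is exactly this pattern.\<close>
definition jac_nz :: "('a \<times> 'a) set \<Rightarrow> 'a set \<Rightarrow> 'a \<Rightarrow> 'a \<Rightarrow> bool" where
  "jac_nz E K a b \<longleftrightarrow> a \<in> K \<and> b \<in> K \<and> (a = b \<or> (b, a) \<in> E)"

definition fully_indecomposable :: "nat \<Rightarrow> (nat \<Rightarrow> nat \<Rightarrow> bool) \<Rightarrow> bool" where
  "fully_indecomposable k Z \<longleftrightarrow> k \<ge> 1 \<and> (k = 1 \<longrightarrow> Z 0 0) \<and>
     (\<forall>S T. S \<subseteq> {..<k} \<and> T \<subseteq> {..<k} \<and> S \<noteq> {} \<and> T \<noteq> {} \<and> card S + card T = k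
        \<longrightarrow> (\<exists>r\<in>S. \<exists>c\<in>T. Z r c))"

text \<open>Frobenius-Koenig normal form of J_K: the permutation matrices P, Q are encoded by
  bijections sig, tau : {0..<card K} -> K (row r of P J Q is row sig r of J, column c is
  column tau c of J); the diagonal blocks are rows/columns bd i ..< bd (Suc i), i < p.
  Block upper triangular: a nonzero entry in block row i, block column i' has i \<le> i'.\<close>
definition FK_normal_form ::
  "('a \<times> 'a) set \<Rightarrow> 'a set \<Rightarrow> (nat \<Rightarrow> 'a) \<Rightarrow> (nat \<Rightarrow> 'a) \<Rightarrow> nat \<Rightarrow> (nat \<Rightarrow> nat) \<Rightarrow> bool" where
  "FK_normal_form E K sig tau p bd \<longleftrightarrow>
     bij_betw sig {..<card K} K \<and> bij_betw tau {..<card K} K \<and>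
     bd 0 = 0 \<and> bd p = card K \<and> (\<forall>i<p. bd i < bd (Suc i)) \<and>
     (\<forall>i<p. \<forall>i'<p. \<forall>r\<in>{bd i..<bd (Suc i)}. \<forall>c\<in>{bd i'..<bd (Suc i')}.
         jac_nz E K (sig r) (tau c) \<longrightarrow> i \<le> i') \<and>
     (\<forall>i<p. fully_indecomposable (bd (Suc i) - bd i)
              (\<lambda>r c. jac_nz E K (sig (bd i + r)) (tau (bd i + c))))"

definition FK_block_nodes :: "(nat \<Rightarrow> 'a) \<Rightarrow> (nat \<Rightarrow> nat) \<Rightarrow> nat \<Rightarrow> 'a set" where
  "FK_block_nodes sig bd j = sig ` {bd j..<bd (Suc j)}"

end

theory Submission
  imports Defs
begin

text \<open>Every node carries a self-coupling, so by block triangularity a node indexing a column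
  of the first \<open>t\<close> diagonal blocks also indexes one of their rows; counting shows that the
  rows and the columns of the first \<open>t\<close> blocks are indexed by the same nodes. An arrow
  \<open>b \<rightarrow> a\<close> is a nonzero entry in row \<open>a\<close>, column \<open>b\<close>, so these leading node sets are
  closed under arrows: a path never returns from the leading blocks to a later block, which
  separates the blocks. Inside a diagonal block, full indecomposability says that every proper
  nonempty set of its nodes has an arrow leaving it into the block, so the block is strongly
  connected.\<close>

lemma segment_containing:
  fixes bd :: "nat \<Rightarrow> 'b::linorder"
  assumes "bd 0 \<le> r" "r < bd p"
  obtains i where "i < p" "bd i \<le> r" "r < bd (Suc i)"
  using assms(2)
proof (induction p)
  case (Suc p)
  show ?case
  proof (cases "r < bd p")
    case True
    then show ?thesis using Suc.IH Suc.prems(1) less_SucI by blast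
  next
    case False
    then show ?thesis using Suc.prems by (meson lessI not_less)
  qed
qed (use assms(1) in simp)

lemma image_shift_lessThan:
  fixes a b :: nat
  shows "(\<lambda>r. f (a + r)) ` {..<b - a} = f ` {a..<b}"
proof -
  have "(+) a ` {..<b - a} = {a..<b}"
    by (cases "a \<le> b") (auto simp: lessThan_atLeast0)
  then show ?thesis by (metis image_image)
qed

lemma inj_on_shift_lessThan:
  fixes a b n :: nat
  assumes "inj_on f {..<n}" "b \<le> n"
  shows "inj_on (\<lambda>r. f (a + r)) {..<b - a}"
proof -
  have "(+) a ` {..<b - a} \<subseteq> {..<n}" using assms(2) by auto
  then show ?thesis
    using comp_inj_on[of "(+) a" "{..<b - a}" f] inj_on_subset[OF assms(1)] by (simp add: o_def)
qed

lemma fully_indecomposable_crossing: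
  assumes FI: "fully_indecomposable k (\<lambda>r c. R (f r) (g c))"
    and f: "inj_on f {..<k}" "f ` {..<k} = B"
    and g: "inj_on g {..<k}" "g ` {..<k} = B"
    and X: "X \<subseteq> B" "X \<noteq> {}" "X \<noteq> B"
  shows "\<exists>y\<in>B - X. \<exists>x\<in>X. R y x"
proof -
  define S where "S = {r \<in> {..<k}. f r \<in> B - X}"
  define T where "T = {c \<in> {..<k}. g c \<in> X}"
  have S_T: "S \<subseteq> {..<k}" "T \<subseteq> {..<k}" by (auto simp: S_def T_def)
  have S_img: "f ` S = B - X" and T_img: "g ` T = X"
    using f(2) g(2) X(1) by (auto simp: S_def T_def)
  then have "S \<noteq> {}" "T \<noteq> {}" using X by auto
  moreover have "card S = card (B - X)"
    using S_img card_image[OF inj_on_subset[OF f(1) S_T(1)]] by simp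
  moreover have "card T = card X"
    using T_img card_image[OF inj_on_subset[OF g(1) S_T(2)]] by simp
  moreover have "card (B - X) + card X = k"
  proof -
    have "finite B" "card B = k" using f card_image[OF f(1)] by auto
    moreover have "finite X" using \<open>finite B\<close> X(1) finite_subset by blast
    ultimately show ?thesis
      using card_Diff_subset[OF \<open>finite X\<close> X(1)] card_mono[OF \<open>finite B\<close> X(1)] by simp
  qed
  ultimately have "\<exists>r\<in>S. \<exists>c\<in>T. R (f r) (g c)"
    using FI S_T unfolding fully_indecomposable_def by simp
  then obtain r c where "r \<in> S" "c \<in> T" "R (f r) (g c)" by blast
  then show ?thesis by (auto simp: S_def T_def)
qed

lemma subset_reachable_if_crossing:
  assumes "a \<in> B"
    and crossing: "\<And>X. X \<subseteq> B \<Longrightarrow> X \<noteq> {} \<Longrightarrow> X \<noteq> B \<Longrightarrow> \<exists>x\<in>X. \<exists>y\<in>B - X. (x, y) \<in> R"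
  shows "B \<subseteq> R\<^sup>* `` {a}"
proof (rule ccontr)
  let ?X = "B \<inter> R\<^sup>* `` {a}"
  assume "\<not> B \<subseteq> R\<^sup>* `` {a}"
  then have "?X \<noteq> B" by blast
  moreover have "?X \<noteq> {}" using \<open>a \<in> B\<close> by blast
  ultimately obtain x y where "x \<in> ?X" "y \<in> B - ?X" "(x, y) \<in> R"
    using crossing[of ?X] by blast
  then show False by (blast intro: rtrancl_into_rtrancl)
qed

locale FK_form =
  fixes E :: "('a \<times> 'a) set" and K :: "'a set"
    and sig tau :: "nat \<Rightarrow> 'a" and p :: nat and bd :: "nat \<Rightarrow> nat"
  assumes FK: "FK_normal_form E K sig tau p bd"
begin

lemma sig_inj: "inj_on sig {..<card K}" and sig_image: "sig ` {..<card K} = K"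
  and tau_inj: "inj_on tau {..<card K}" and tau_image: "tau ` {..<card K} = K"
  and bd_0: "bd 0 = 0"
  and bd_p: "bd p = card K"
  and bd_step: "i < p \<Longrightarrow> bd i < bd (Suc i)"
  and block_triangular: "\<lbrakk>i < p; i' < p; r \<in> {bd i..<bd (Suc i)}; c \<in> {bd i'..<bd (Suc i')};
      jac_nz E K (sig r) (tau c)\<rbrakk> \<Longrightarrow> i \<le> i'"
  and diagonal_block_indecomposable: "i < p \<Longrightarrow> fully_indecomposable (bd (Suc i) - bd i)
      (\<lambda>r c. jac_nz E K (sig (bd i + r)) (tau (bd i + c)))"
  using FK unfolding FK_normal_form_def bij_betw_def by blast+

lemma bd_mono: "i \<le> i' \<Longrightarrow> i' \<le> p \<Longrightarrow> bd i \<le> bd i'"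
  by (rule lift_Suc_mono_le_ivl[where N = "{..<p}"]) (auto intro: less_imp_le bd_step)

lemma bd_le_card: "t \<le> p \<Longrightarrow> bd t \<le> card K"
  using bd_mono[of t p] bd_p by simp

lemma nonzero_row_in_prefix:
  assumes "t \<le> p" "r < card K" "c < bd t" "jac_nz E K (sig r) (tau c)"
  shows "r < bd t"
proof -
  have "bd 0 \<le> r" "r < bd p" using assms(2) bd_0 bd_p by simp_all
  then obtain i where i: "i < p" "bd i \<le> r" "r < bd (Suc i)" by (rule segment_containing)
  have "bd 0 \<le> c" "c < bd p" using assms(1,3) bd_0 bd_mono[of t p] by simp_all
  then obtain i' where i': "i' < p" "bd i' \<le> c" "c < bd (Suc i')" by (rule segment_containing)
  have "i \<le> i'" using block_triangular[OF i(1) i'(1) _ _ assms(4)] i i' by simp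
  moreover have "i' < t"
  proof (rule ccontr)
    assume "\<not> i' < t"
    then have "bd t \<le> bd i'" using bd_mono i'(1) by simp
    then show False using i'(2) assms(3) by simp
  qed
  ultimately have "bd (Suc i) \<le> bd t" using bd_mono assms(1) by simp
  then show ?thesis using i by simp
qed

definition leading_nodes :: "nat \<Rightarrow> 'a set" where
  "leading_nodes t = sig ` {..<bd t}"

lemma leading_columns_eq_leading_nodes:
  assumes "t \<le> p"
  shows "tau ` {..<bd t} = leading_nodes t"
proof (rule card_subset_eq)
  have prefix: "{..<bd t} \<subseteq> {..<card K}" using bd_le_card assms by auto
  show "finite (leading_nodes t)" by (simp add: leading_nodes_def)
  show "tau ` {..<bd t} \<subseteq> leading_nodes t"
  proof
    fix x assume "x \<in> tau ` {..<bd t}"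
    then obtain c where c: "c < bd t" "x = tau c" by auto
    then have "x \<in> K" using prefix tau_image by auto
    then obtain r where r: "r < card K" "x = sig r" using sig_image by auto
    have "jac_nz E K (sig r) (tau c)" using \<open>x \<in> K\<close> c r by (simp add: jac_nz_def)
    then have "r < bd t" using nonzero_row_in_prefix[OF assms r(1) c(1)] by simp
    then show "x \<in> leading_nodes t" using r by (auto simp: leading_nodes_def)
  qed
  show "card (tau ` {..<bd t}) = card (leading_nodes t)"
    using card_image[OF inj_on_subset[OF tau_inj prefix]]
      card_image[OF inj_on_subset[OF sig_inj prefix]]
    by (simp add: leading_nodes_def)
qed

lemma leading_nodes_closed:
  assumes "t \<le> p" "(x, y) \<in> (restr E K)\<^sup>*" "x \<in> leading_nodes t"
  shows "y \<in> leading_nodes t"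
  using assms(2)
proof (induction rule: rtrancl_induct)
  case base
  show ?case by (fact assms(3))
next
  case (step y z)
  then have "(y, z) \<in> E" "y \<in> K" "z \<in> K" by (auto simp: restr_def)
  obtain c where c: "c < bd t" "y = tau c"
    using step.IH leading_columns_eq_leading_nodes[OF assms(1)] by auto
  obtain r where r: "r < card K" "z = sig r" using \<open>z \<in> K\<close> sig_image by auto
  have "jac_nz E K (sig r) (tau c)"
    using \<open>(y, z) \<in> E\<close> \<open>y \<in> K\<close> \<open>z \<in> K\<close> c r by (simp add: jac_nz_def)
  then have "r < bd t" using nonzero_row_in_prefix[OF assms(1) r(1) c(1)] by simp
  then show "z \<in> leading_nodes t" using r by (simp add: leading_nodes_def)
qed

lemma image_block_eq:
  assumes "j < p" "inj_on f {..<card K}"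
  shows "f ` {bd j..<bd (Suc j)} = f ` {..<bd (Suc j)} - f ` {..<bd j}"
proof -
  have "{..<bd j} \<subseteq> {..<bd (Suc j)}" "{..<bd (Suc j)} \<subseteq> {..<card K}"
    using bd_step[OF assms(1)] bd_le_card[of "Suc j"] assms(1) by auto
  then have "f ` ({..<bd (Suc j)} - {..<bd j}) = f ` {..<bd (Suc j)} - f ` {..<bd j}"
    by (intro inj_on_image_set_diff[OF assms(2)]) auto
  then show ?thesis by simp
qed

lemma block_nodes_eq:
  "j < p \<Longrightarrow> FK_block_nodes sig bd j = leading_nodes (Suc j) - leading_nodes j"
  using image_block_eq[OF _ sig_inj] by (simp add: FK_block_nodes_def leading_nodes_def)

lemma block_nodes_subset: "j < p \<Longrightarrow> FK_block_nodes sig bd j \<subseteq> K"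
  using sig_image bd_le_card[of "Suc j"] by (force simp: FK_block_nodes_def)

lemma block_columns_eq:
  "j < p \<Longrightarrow> tau ` {bd j..<bd (Suc j)} = FK_block_nodes sig bd j"
  using image_block_eq[OF _ tau_inj] leading_columns_eq_leading_nodes
  by (simp add: block_nodes_eq)

lemma block_not_path_equiv_outside:
  assumes "j < p" "a \<in> FK_block_nodes sig bd j" "b \<notin> FK_block_nodes sig bd j"
  shows "\<not> path_equiv E K a b"
proof
  assume "path_equiv E K a b"
  then have "(a, b) \<in> (restr E K)\<^sup>*" "(b, a) \<in> (restr E K)\<^sup>*"
    unfolding path_equiv_def by auto
  moreover have "a \<in> leading_nodes (Suc j)" "a \<notin> leading_nodes j"
    "b \<notin> leading_nodes (Suc j) \<or> b \<in> leading_nodes j"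
    using assms by (auto simp: block_nodes_eq)
  ultimately show False
    using leading_nodes_closed[of "Suc j" a b] leading_nodes_closed[of j b a] assms(1) by auto
qed

lemma block_strongly_connected:
  assumes "j < p" "a \<in> FK_block_nodes sig bd j" "b \<in> FK_block_nodes sig bd j"
  shows "(a, b) \<in> (restr E K)\<^sup>*"
proof -
  let ?B = "FK_block_nodes sig bd j" and ?k = "bd (Suc j) - bd j"
  have rows: "inj_on (\<lambda>r. sig (bd j + r)) {..<?k}" "(\<lambda>r. sig (bd j + r)) ` {..<?k} = ?B"
    using inj_on_shift_lessThan[OF sig_inj bd_le_card] assms(1)
    by (auto simp: image_shift_lessThan FK_block_nodes_def)
  have cols: "inj_on (\<lambda>c. tau (bd j + c)) {..<?k}" "(\<lambda>c. tau (bd j + c)) ` {..<?k} = ?B"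
    using inj_on_shift_lessThan[OF tau_inj bd_le_card] assms(1)
    by (auto simp: image_shift_lessThan block_columns_eq)
  have "\<exists>x\<in>X. \<exists>y\<in>?B - X. (x, y) \<in> restr E K"
    if X: "X \<subseteq> ?B" "X \<noteq> {}" "X \<noteq> ?B" for X
  proof -
    obtain y x where "y \<in> ?B - X" "x \<in> X" "jac_nz E K y x"
      using fully_indecomposable_crossing[where R = "jac_nz E K"
          and f = "\<lambda>r. sig (bd j + r)" and g = "\<lambda>c. tau (bd j + c)",
          OF diagonal_block_indecomposable[OF assms(1)] rows cols X] by blast
    moreover have "x \<noteq> y" using \<open>y \<in> ?B - X\<close> \<open>x \<in> X\<close> by blast
    ultimately show ?thesis by (auto simp: jac_nz_def restr_def)
  qed
  then show ?thesis using subset_reachable_if_crossing[of a ?B] assms(2,3) by blast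
qed

lemma block_path_component:
  assumes "j < p"
  shows "path_component E K (FK_block_nodes sig bd j)"
proof -
  let ?B = "FK_block_nodes sig bd j"
  obtain a where a: "a \<in> ?B"
    using bd_step[OF assms] by (fastforce simp: FK_block_nodes_def)
  have "?B = {b. path_equiv E K a b}"
  proof (intro equalityI subsetI)
    fix b assume "b \<in> ?B"
    then show "b \<in> {b. path_equiv E K a b}"
      using block_strongly_connected[OF assms] block_nodes_subset[OF assms] a
      by (auto simp: path_equiv_def)
  next
    fix b assume "b \<in> {b. path_equiv E K a b}"
    then show "b \<in> ?B" using block_not_path_equiv_outside[OF assms a] by blast
  qed
  then show ?thesis using a block_nodes_subset[OF assms] by (auto simp: path_component_def)
qed

end

theorem theorem3p7:
  fixes V :: "'a set" and E :: "('a \<times> 'a) set" and inp :: "nat \<Rightarrow> 'a"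
    and n m :: nat and out :: 'a
    and sig tau :: "nat \<Rightarrow> 'a" and p :: nat and bd :: "nat \<Rightarrow> nat" and j :: nat
  defines "D \<equiv> vestigial V E inp out m"
  defines "B \<equiv> FK_block_nodes sig bd j"
  assumes "core_network V E inp n out"
    and "m \<in> {1..n}"
    and "D \<noteq> {}"
    and "FK_normal_form E D sig tau p bd"
    and "j < p"
  shows "(\<forall>a\<in>B. \<forall>b\<in>D - B. \<not> path_equiv E D a b) \<and> path_component E D B"
proof -
  interpret FK_form E D sig tau p bd by unfold_locales fact
  show ?thesis
    using block_not_path_equiv_outside block_path_component \<open>j < p\<close> unfolding B_def by blast
qed

end
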